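(* Let $G=(V,A)$, $\Xi$ and $\mathcal{S}^1$ be as in the context. Let $\bar{T}$ be a tree in the undirected graph $\bar{G}$ underlying $G$ with node set $\widetilde{\mathcal{I}}\subseteq V$, and let $l\in A$ be an arc that is incident to exactly one node of $\bar{T}$. Then for any partition $\widetilde{\mathcal{I}}_1,\widetilde{\mathcal{I}}_2$ of $\widetilde{\mathcal{I}}$ (i.e. $\widetilde{\mathcal{I}}_1\cap\widetilde{\mathcal{I}}_2=\emptyset$, $\widetilde{\mathcal{I}}_1\cup\widetilde{\mathcal{I}}_2=\widetilde{\mathcal{I}}$): (i) if $h(l)\in\widetilde{\mathcal{I}}$, then $[\{i^+\}_{i\in\widetilde{\mathcal{I}}_1},\{i^-\}_{i\in\widetilde{\mathcal{I}}_2}]$ is an EC\&R assignment for class-$l^+$; (ii) if $h(l)\in\widetilde{\mathcal{I}}$, then $[\{i^-\}_{i\in\widetilde{\mathcal{I}}_1},\{i^+\}_{i\in\widetilde{\mathcal{I}}_2}]$ is an EC\&R assignment for class-$l^-$; (iii) if $t(l)\in\widetilde{\mathcal{I}}$, then $[\{i^-\}_{i\in\widetilde{\mathcal{I}}_1},\{i^+\}_{i\in\widetilde{\mathcal{I}}_2}]$ is an EC\&R assignment for class-$l^+$; (iv) if $t(l)\in\widetilde{\mathcal{I}}$, then $[\{i^+\}_{i\in\widetilde{\mathcal{I}}_1},\{i^-\}_{i\in\widetilde{\mathcal{I}}_2}]$ is an EC\&R assignment for class-$l^-$.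
   Context: $G=(V,A)$ is a directed network; its arcs are identified with $N=\{1,\dots,n\}$, $x_a$ is the flow on arc $a$, $t(a)$ and $h(a)$ are the tail and head of $a$, and $\delta^+(v),\delta^-(v)$ are the outgoing and incoming arcs of node $v$. $\Xi=\{x\in\mathbb{R}^n: Ex\ge f,\ 0\le x\le u\}$ where the rows $E_{t\cdot}x\ge f_t$, $t\in T$, are: for each $v\in V$, the positive flow-balance inequality (index $v^+$) $\sum_{a\in\delta^+(v)}x_a-\sum_{a\in\delta^-(v)}x_a\ge f_v$ and the negative flow-balance inequality (index $v^-$) $-\sum_{a\in\delta^+(v)}x_a+\sum_{a\in\delta^-(v)}x_a\ge -f_v$; $u$ is the capacity vector. $\mathcal{S}^1=\{(x,y_1,z)\in\Xi\times[0,1]\times\mathbb{R}^A : y_1x_k=z_k\ \forall k\in A\}$. EC\&R assignment (case of a single $y$ variable): a class is a pair $l\in A$ and sign $\sigma\in\{+,-\}$ (class-$l^\sigma$). A pair $[\mathcal{I}_1,\bar{\mathcal{I}}]$ of disjoint subsets of $T$ is an EC\&R assignment for class-$l^\sigma$ if there are positive weights $\gamma_t$ ($t\in\mathcal{I}_1$), $\theta_t$ ($t\in\bar{\mathcal{I}}$) such that, when one sums the base equality $y_1x_l-z_l=0$ multiplied by $+1$ (if $\sigma=+$) or $-1$ (if $\sigma=-$), the inequalities $\gamma_t\,y_1(E_{t\cdot}x-f_t)\ge 0$ for $t\in\mathcal{I}_1$, and $\theta_t(1-y_1)(E_{t\cdot}x-f_t)\ge0$ for $t\in\bar{\mathcal{I}}$,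 the following hold: (C1) at least $|\mathcal{I}_1|+|\bar{\mathcal{I}}|$ bilinear terms $y_1x_i$ are canceled (have coefficient zero in the sum although they appear in some summand); (C2) if $\mathcal{I}_1\cup\bar{\mathcal{I}}\neq\emptyset$, then for each constraint used in the sum (including the base equality), at least one of the bilinear terms created by multiplying it with its weight is canceled. *)

theory Defs
  imports Complex_Main
begin

(* Directed network: vertex set V, arc set A, tail tail, head head.
   Rows of E are indexed by (v, s): (v, Plus) is the positive flow-balance
   inequality v^+, (v, Minus) the negative one v^-. *)

datatype sgn = Plus | Minus

definition sgn_val :: "sgn \<Rightarrow> real" where
  "sgn_val s = (if s = Plus then 1 else -1)"

definition Ecoef :: "('a \<Rightarrow> 'v) \<Rightarrow> ('a \<Rightarrow> 'v) \<Rightarrow> ('v \<times> sgn) \<Rightarrow> 'a \<Rightarrow> real" where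
  "Ecoef tail head r a =
     sgn_val (snd r) * ((if tail a = fst r then 1 else 0) - (if head a = fst r then 1 else 0))"

definition urel :: "('a \<Rightarrow> 'v) \<Rightarrow> ('a \<Rightarrow> 'v) \<Rightarrow> 'a set \<Rightarrow> ('v \<times> 'v) set" where
  "urel tail head F = {(tail a, head a) | a. a \<in> F} \<union> {(head a, tail a) | a. a \<in> F}"

definition is_tree :: "'a set \<Rightarrow> ('a \<Rightarrow> 'v) \<Rightarrow> ('a \<Rightarrow> 'v) \<Rightarrow> 'v set \<Rightarrow> 'a set \<Rightarrow> bool" where
  "is_tree A tail head I F \<longleftrightarrow>
     F \<subseteq> A \<and> I \<noteq> {} \<and>
     (\<forall>a\<in>F. tail a \<in> I \<and> head a \<in> I \<and> tail a \<noteq> head a) \<and>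
     (\<forall>u\<in>I. \<forall>w\<in>I. (u, w) \<in> (urel tail head F)\<^sup>*) \<and>
     (\<forall>e\<in>F. (tail e, head e) \<notin> (urel tail head (F - {e}))\<^sup>*)"

(* Bilinear coefficient of y*x_i in each summand:
     base equality (times sigma):          sigma * [i = l]
     gamma_t * y * (E_t x - f_t):           gamma_t * E_{t,i}
     theta_t * (1-y) * (E_t x - f_t):       - theta_t * E_{t,i}            *)
definition base_coef :: "'a \<Rightarrow> sgn \<Rightarrow> 'a \<Rightarrow> real" where
  "base_coef l \<sigma> i = (if i = l then sgn_val \<sigma> else 0)"

definition ECR_assignment ::
  "'v set \<Rightarrow> 'a set \<Rightarrow> ('a \<Rightarrow> 'v) \<Rightarrow> ('a \<Rightarrow> 'v) \<Rightarrow> 'a \<Rightarrow> sgn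
   \<Rightarrow> ('v \<times> sgn) set \<Rightarrow> ('v \<times> sgn) set \<Rightarrow> bool" where
  "ECR_assignment V A tail head l \<sigma> I1 Ib \<longleftrightarrow>
     I1 \<subseteq> V \<times> UNIV \<and> Ib \<subseteq> V \<times> UNIV \<and> I1 \<inter> Ib = {} \<and>
     (\<exists>\<gamma> \<theta> :: ('v \<times> sgn) \<Rightarrow> real.
        (\<forall>t\<in>I1. \<gamma> t > 0) \<and> (\<forall>t\<in>Ib. \<theta> t > 0) \<and>
        (let total = (\<lambda>i. base_coef l \<sigma> i + (\<Sum>t\<in>I1. \<gamma> t * Ecoef tail head t i)
                                         - (\<Sum>t\<in>Ib. \<theta> t * Ecoef tail head t i));
             appears = (\<lambda>i. base_coef l \<sigma> i \<noteq> 0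
                              \<or> (\<exists>t\<in>I1. \<gamma> t * Ecoef tail head t i \<noteq> 0)
                              \<or> (\<exists>t\<in>Ib. - (\<theta> t * Ecoef tail head t i) \<noteq> 0));
             canceled = {i \<in> A. appears i \<and> total i = 0}
         in card canceled \<ge> card I1 + card Ib \<and>
            (I1 \<union> Ib \<noteq> {} \<longrightarrow>
               (\<exists>i\<in>canceled. base_coef l \<sigma> i \<noteq> 0) \<and>
               (\<forall>t\<in>I1. \<exists>i\<in>canceled. \<gamma> t * Ecoef tail head t i \<noteq> 0) \<and>
               (\<forall>t\<in>Ib. \<exists>i\<in>canceled. - (\<theta> t * Ecoef tail head t i) \<noteq> 0))))"

end

(* Take all multipliers equal to 1.  The rows of I1 (multiplied by y) and of I2 (multiplied by
   1 - y) have opposite signs, so together they contribute to y x_a plus or minus the net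
   outflow of arc a from I.  This vanishes on every tree arc, both of whose ends lie in I, and
   on l it is +-1 and cancels the base term for the stated choice of signs.  Hence F and l are
   |F| + 1 >= |I| canceled terms, a connected graph on I having at least |I| - 1 edges; and
   every node of I is an end of l or of a tree arc, which gives condition (C2). *)

theory Submission
  imports Defs
begin

lemma rtrancl_Un_Image_subset:
  "(R \<union> Q)\<^sup>* `` S \<subseteq> R\<^sup>* `` (S \<union> Range Q)"
proof
  fix z assume "z \<in> (R \<union> Q)\<^sup>* `` S"
  then obtain s where "s \<in> S" and "(s, z) \<in> (R \<union> Q)\<^sup>*" by blast
  from this(2) show "z \<in> R\<^sup>* `` (S \<union> Range Q)"
  proof (induction rule: rtrancl_induct)
    case base
    show ?case using \<open>s \<in> S\<close> by blast
  next
    case (step y z)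
    then show ?case by (blast intro: rtrancl_into_rtrancl)
  qed
qed

lemma rtrancl_Un_Image_subset_if_Domain_unreachable:
  assumes "Domain Q \<inter> R\<^sup>* `` S = {}"
  shows "(R \<union> Q)\<^sup>* `` S \<subseteq> R\<^sup>* `` S"
proof
  fix z assume "z \<in> (R \<union> Q)\<^sup>* `` S"
  then obtain s where "s \<in> S" and "(s, z) \<in> (R \<union> Q)\<^sup>*" by blast
  from this(2) show "z \<in> R\<^sup>* `` S"
  proof (induction rule: rtrancl_induct)
    case base
    show ?case using \<open>s \<in> S\<close> by blast
  next
    case (step y z)
    then show ?case using assms by (blast intro: rtrancl_into_rtrancl)
  qed
qed

lemma rtrancl_Image_insert_sym_edge:
  "\<exists>w. (R \<union> {(x, y), (y, x)})\<^sup>* `` S \<subseteq> R\<^sup>* `` (insert w S)"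
proof (cases "x \<in> R\<^sup>* `` S \<or> y \<in> R\<^sup>* `` S")
  case True
  then obtain u w where uw: "{u, w} = {x, y}" "u \<in> R\<^sup>* `` S" by blast
  have "(R \<union> {(x, y), (y, x)})\<^sup>* `` S \<subseteq> R\<^sup>* `` (S \<union> {u, w})"
    using rtrancl_Un_Image_subset[of R "{(x, y), (y, x)}" S] uw(1) by auto
  also have "\<dots> \<subseteq> R\<^sup>* `` (insert w S)"
    using uw(2) by (blast intro: rtrancl_trans)
  finally show ?thesis ..
next
  case False
  then have "(R \<union> {(x, y), (y, x)})\<^sup>* `` S \<subseteq> R\<^sup>* `` S"
    by (intro rtrancl_Un_Image_subset_if_Domain_unreachable) auto
  then show ?thesis by blast
qed

lemma card_sym_rtrancl_Image_le:
  assumes "finite E" "finite S"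
  shows "card ((E \<union> E\<inverse>)\<^sup>* `` S) \<le> card E + card S"
  using assms
proof (induction E arbitrary: S rule: finite_induct)
  case empty
  then show ?case by simp
next
  case (insert e E)
  obtain x y where e: "e = (x, y)" by fastforce
  have "insert e E \<union> (insert e E)\<inverse> = (E \<union> E\<inverse>) \<union> {(x, y), (y, x)}"
    unfolding e by auto
  moreover obtain w where "((E \<union> E\<inverse>) \<union> {(x, y), (y, x)})\<^sup>* `` S \<subseteq> (E \<union> E\<inverse>)\<^sup>* `` (insert w S)"
    using rtrancl_Image_insert_sym_edge[of "E \<union> E\<inverse>" x y S] by blast
  ultimately have "card ((insert e E \<union> (insert e E)\<inverse>)\<^sup>* `` S) \<le> card ((E \<union> E\<inverse>)\<^sup>* `` (insert w S))"
    using insert.hyps(1) insert.prems by (simp add: card_mono)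
  also have "\<dots> \<le> card E + card (insert w S)"
    using insert.IH insert.prems by simp
  also have "\<dots> \<le> card (insert e E) + card S"
    using insert.hyps insert.prems by (simp add: card_insert_if)
  finally show ?case .
qed

lemma urel_eq_sym:
  "urel tail head F = (\<lambda>a. (tail a, head a)) ` F \<union> ((\<lambda>a. (tail a, head a)) ` F)\<inverse>"
  unfolding urel_def by auto

lemma card_le_Suc_card_arcs_if_connected:
  assumes "finite F" "v \<in> I" and conn: "\<forall>u\<in>I. (v, u) \<in> (urel tail head F)\<^sup>*"
  shows "card I \<le> card F + 1"
proof -
  let ?E = "(\<lambda>a. (tail a, head a)) ` F"
  have "I \<subseteq> (urel tail head F)\<^sup>* `` {v}"
    using conn by blast
  then have "card I \<le> card ((?E \<union> ?E\<inverse>)\<^sup>* `` {v})"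
    using assms(1) by (intro card_mono) (simp_all add: urel_eq_sym)
  also have "\<dots> \<le> card ?E + 1"
    using card_sym_rtrancl_Image_le[of ?E "{v}"] assms(1) by simp
  also have "\<dots> \<le> card F + 1"
    using card_image_le[OF assms(1)] by simp
  finally show ?thesis .
qed

lemma is_tree_card_nodes_le:
  assumes "finite A" "is_tree A tail head I F"
  shows "card I \<le> card F + 1"
proof -
  from assms(2) obtain v where "v \<in> I" "\<forall>u\<in>I. (v, u) \<in> (urel tail head F)\<^sup>*"
    unfolding is_tree_def by blast
  moreover have "finite F"
    using assms finite_subset unfolding is_tree_def by blast
  ultimately show ?thesis
    by (intro card_le_Suc_card_arcs_if_connected)
qed

lemma is_tree_node_incident:
  assumes "is_tree A tail head I F" "i \<in> I" "v \<in> I" "i \<noteq> v"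
  shows "\<exists>a\<in>F. tail a = i \<or> head a = i"
proof -
  have "(i, v) \<in> (urel tail head F)\<^sup>*"
    using assms(1-3) unfolding is_tree_def by blast
  then obtain w where "(i, w) \<in> urel tail head F"
    using assms(4) by (meson converse_rtranclE)
  then show ?thesis unfolding urel_def by auto
qed

text \<open>The coefficient of \<open>x\<^sub>a\<close> in the sum of the positive flow-balance rows \<open>v\<^sup>+\<close>, \<open>v \<in> J\<close>.\<close>

definition outflow_coef :: "('a \<Rightarrow> 'v) \<Rightarrow> ('a \<Rightarrow> 'v) \<Rightarrow> 'v set \<Rightarrow> 'a \<Rightarrow> real" where
  "outflow_coef tail head J a = (if tail a \<in> J then 1 else 0) - (if head a \<in> J then 1 else 0)"

lemma sum_Ecoef_rows:
  assumes "finite J"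
  shows "(\<Sum>t\<in>(\<lambda>i. (i, s)) ` J. Ecoef tail head t a) = sgn_val s * outflow_coef tail head J a"
proof -
  have "inj_on (\<lambda>i. (i, s)) J" by (simp add: inj_on_def)
  then show ?thesis
    using assms by (simp add: sum.reindex Ecoef_def outflow_coef_def sum_subtractf flip: sum_distrib_left)
qed

lemma outflow_coef_Un:
  "J1 \<inter> J2 = {} \<Longrightarrow> outflow_coef tail head (J1 \<union> J2) a
     = outflow_coef tail head J1 a + outflow_coef tail head J2 a"
  unfolding outflow_coef_def by auto

lemma sum_Ecoef_opposite_rows:
  assumes "finite J1" "finite J2" "J1 \<inter> J2 = {}" "sgn_val s2 = - sgn_val s1"
  shows "(\<Sum>t\<in>(\<lambda>i. (i, s1)) ` J1. Ecoef tail head t a) - (\<Sum>t\<in>(\<lambda>i. (i, s2)) ` J2. Ecoef tail head t a)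
    = sgn_val s1 * outflow_coef tail head (J1 \<union> J2) a"
  using assms by (simp add: sum_Ecoef_rows outflow_coef_Un algebra_simps)

lemma card_row_images:
  assumes "finite J1" "finite J2" "J1 \<inter> J2 = {}"
  shows "card ((\<lambda>i. (i, s1)) ` J1) + card ((\<lambda>i. (i, s2)) ` J2) = card (J1 \<union> J2)"
  using assms by (simp add: card_image card_Un_disjoint inj_on_def)

lemma Ecoef_incident_nonzero:
  "tail a \<noteq> head a \<Longrightarrow> tail a = i \<or> head a = i \<Longrightarrow> Ecoef tail head (i, s) a \<noteq> 0"
  unfolding Ecoef_def sgn_val_def by auto

lemma ECR_assignment_unit_weightsI:
  assumes "finite A" "I1 \<subseteq> V \<times> UNIV" "Ib \<subseteq> V \<times> UNIV" "I1 \<inter> Ib = {}"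
    and "l \<in> C" "C \<subseteq> A" "card I1 + card Ib \<le> card C"
    and cancel: "\<And>a. a \<in> C \<Longrightarrow> base_coef l \<sigma> a
       + (\<Sum>t\<in>I1. Ecoef tail head t a) - (\<Sum>t\<in>Ib. Ecoef tail head t a) = 0"
    and appears: "\<And>a. a \<in> C \<Longrightarrow> a \<noteq> l \<Longrightarrow> \<exists>t\<in>I1 \<union> Ib. Ecoef tail head t a \<noteq> 0"
    and rows: "\<And>t. t \<in> I1 \<union> Ib \<Longrightarrow> \<exists>a\<in>C. Ecoef tail head t a \<noteq> 0"
  shows "ECR_assignment V A tail head l \<sigma> I1 Ib"
proof -
  define canceled where "canceled = {a \<in> A.
      (base_coef l \<sigma> a \<noteq> 0 \<or> (\<exists>t\<in>I1. Ecoef tail head t a \<noteq> 0) \<or> (\<exists>t\<in>Ib. Ecoef tail head t a \<noteq> 0))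
      \<and> base_coef l \<sigma> a + (\<Sum>t\<in>I1. Ecoef tail head t a) - (\<Sum>t\<in>Ib. Ecoef tail head t a) = 0}"
  have base_l: "base_coef l \<sigma> l \<noteq> 0"
    by (simp add: base_coef_def sgn_val_def)
  have "C \<subseteq> canceled"
    unfolding canceled_def using assms(6) cancel appears base_l by blast
  then have "card I1 + card Ib \<le> card canceled"
    using assms(1,7) card_mono[of canceled C] unfolding canceled_def by simp
  moreover have "l \<in> canceled" "\<And>t. t \<in> I1 \<union> Ib \<Longrightarrow> \<exists>a\<in>canceled. Ecoef tail head t a \<noteq> 0"
    using \<open>C \<subseteq> canceled\<close> assms(5) rows by blast+
  ultimately show ?thesis
    unfolding ECR_assignment_def Let_def
    by (intro conjI exI[where x = "\<lambda>_. 1"] assms(2-4))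
      (simp_all only: mult_1 neg_equal_0_iff_equal canceled_def[symmetric], use base_l in auto)
qed

lemma tree_ECR_assignment:
  assumes "finite V" "finite A"
    and arcs: "\<forall>a\<in>A. tail a \<in> V \<and> head a \<in> V \<and> tail a \<noteq> head a"
    and "I \<subseteq> V" and tree: "is_tree A tail head I F"
    and "l \<in> A" and cut: "(tail l \<in> I) \<noteq> (head l \<in> I)"
    and "I1 \<inter> I2 = {}" "I1 \<union> I2 = I"
    and opposite: "sgn_val s2 = - sgn_val s1"
    and balance: "sgn_val \<sigma> + sgn_val s1 * outflow_coef tail head I l = 0"
  shows "ECR_assignment V A tail head l \<sigma> ((\<lambda>i. (i, s1)) ` I1) ((\<lambda>i. (i, s2)) ` I2)"
proof (rule ECR_assignment_unit_weightsI)
  let ?J1 = "(\<lambda>i. (i, s1)) ` I1" and ?J2 = "(\<lambda>i. (i, s2)) ` I2"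
  have "finite I1" "finite I2"
    using assms(1,4,9) finite_subset by blast+
  have F: "F \<subseteq> A" "\<forall>a\<in>F. tail a \<in> I \<and> head a \<in> I"
    using tree unfolding is_tree_def by auto
  then have "l \<notin> F" using cut by auto
  have total: "(\<Sum>t\<in>?J1. Ecoef tail head t a) - (\<Sum>t\<in>?J2. Ecoef tail head t a)
      = sgn_val s1 * outflow_coef tail head I a" for a
    using sum_Ecoef_opposite_rows[OF \<open>finite I1\<close> \<open>finite I2\<close> assms(8) opposite] assms(9) by simp
  show "l \<in> insert l F" "insert l F \<subseteq> A"
    using F(1) \<open>l \<in> A\<close> by auto
  show "base_coef l \<sigma> a + (\<Sum>t\<in>?J1. Ecoef tail head t a) - (\<Sum>t\<in>?J2. Ecoef tail head t a) = 0"
    if "a \<in> insert l F" for a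
    using that balance F(2) \<open>l \<notin> F\<close>
    by (auto simp: add_diff_eq[symmetric] total base_coef_def outflow_coef_def)
  have "card ?J1 + card ?J2 = card I"
    using card_row_images[OF \<open>finite I1\<close> \<open>finite I2\<close> assms(8)] assms(9) by simp
  also have "\<dots> \<le> card F + 1"
    using is_tree_card_nodes_le[OF assms(2) tree] .
  also have "\<dots> = card (insert l F)"
    using \<open>l \<notin> F\<close> finite_subset[OF F(1) assms(2)] by simp
  finally show "card ?J1 + card ?J2 \<le> card (insert l F)" .
  have nonloop: "tail a \<noteq> head a" if "a \<in> insert l F" for a
    using that F(1) arcs \<open>l \<in> A\<close> by auto
  have row: "\<exists>s. (i, s) \<in> ?J1 \<union> ?J2" if "i \<in> I" for i
    using that assms(9) by auto
  show "\<exists>t\<in>?J1 \<union> ?J2. Ecoef tail head t a \<noteq> 0" if a: "a \<in> insert l F" "a \<noteq> l" for a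
  proof -
    have "tail a \<in> I"
      using a F(2) by auto
    then obtain s where "(tail a, s) \<in> ?J1 \<union> ?J2"
      using row by blast
    then show ?thesis
      using Ecoef_incident_nonzero[of tail a head, OF nonloop[OF a(1)]] by auto
  qed
  obtain v where "v \<in> I" "tail l = v \<or> head l = v"
    using cut by blast
  then have incident: "\<exists>a\<in>insert l F. tail a = i \<or> head a = i" if "i \<in> I" for i
    using is_tree_node_incident[OF tree that] by (cases "i = v") auto
  show "\<exists>a\<in>insert l F. Ecoef tail head t a \<noteq> 0" if t: "t \<in> ?J1 \<union> ?J2" for t
  proof -
    obtain i s where "t = (i, s)" "i \<in> I"
      using t assms(9) by auto
    moreover from \<open>i \<in> I\<close> obtain a where "a \<in> insert l F" "tail a = i \<or> head a = i"
      using incident by blast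
    ultimately show ?thesis
      using Ecoef_incident_nonzero[of tail a head, OF nonloop] by blast
  qed
qed (use assms(2,4,8,9) in auto)

theorem theorem2:
  fixes V :: "'v set" and A :: "'a set" and tail head :: "'a \<Rightarrow> 'v"
    and I I1 I2 :: "'v set" and F :: "'a set" and l :: 'a
  assumes "finite V" and "finite A"
    and "\<forall>a\<in>A. tail a \<in> V \<and> head a \<in> V \<and> tail a \<noteq> head a"
    and "I \<subseteq> V"
    and "is_tree A tail head I F"
    and "l \<in> A" and "(tail l \<in> I) \<noteq> (head l \<in> I)"
    and "I1 \<inter> I2 = {}" and "I1 \<union> I2 = I"
  shows "(head l \<in> I \<longrightarrow> ECR_assignment V A tail head l Plus
                          ((\<lambda>i. (i, Plus)) ` I1) ((\<lambda>i. (i, Minus)) ` I2))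
       \<and> (head l \<in> I \<longrightarrow> ECR_assignment V A tail head l Minus
                          ((\<lambda>i. (i, Minus)) ` I1) ((\<lambda>i. (i, Plus)) ` I2))
       \<and> (tail l \<in> I \<longrightarrow> ECR_assignment V A tail head l Plus
                          ((\<lambda>i. (i, Minus)) ` I1) ((\<lambda>i. (i, Plus)) ` I2))
       \<and> (tail l \<in> I \<longrightarrow> ECR_assignment V A tail head l Minus
                          ((\<lambda>i. (i, Plus)) ` I1) ((\<lambda>i. (i, Minus)) ` I2))"
proof -
  have outflow_l: "outflow_coef tail head I l = (if tail l \<in> I then 1 else -1)"
    using assms(7) by (auto simp: outflow_coef_def)
  show ?thesis
    by (intro conjI impI tree_ECR_assignment[OF assms])
      (use assms(7) in \<open>auto simp: sgn_val_def outflow_l\<close>)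
qed

end
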